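(* Let $n$ be an odd positive integer having a unique prime divisor $p'$ with $v_{p'}(n)=2$, such that $v_q(n)=1$ for every prime divisor $q\neq p'$ of $n$, and let $A=S(n)$. Let $S=(x_1,\ldots,x_l)$ be a sequence in $\mathbb{Z}_n$ such that for every prime divisor $p$ of $n$, at least two terms of $S$ are coprime to $p$. Let $n'=n/p'^{\,2}$ and let $S'$ be the image of $S$ under the natural map $\mathbb{Z}_n\to\mathbb{Z}_{n'}$. Suppose at most one term of $S'$ is a unit. Then $S$ is an $A$-weighted zero-sum sequence.
   Context: $\mathbb{Z}_m$ is the integers mod $m$, $U(m)$ its unit group; $v_p(n)=r$ means $p^r\mid n$, $p^{r+1}\nmid n$. For $A\subseteq\mathbb{Z}_n$, a sequence $(x_1,\ldots,x_l)$ is an $A$-weighted zero-sum sequence if there exist $a_i\in A$ with $\sum a_ix_i=0$. For odd $m=\prod p_i^{r_i}$ and $a\in U(m)$, $\left(\frac{a}{m}\right)=\prod\left(\frac{a}{p_i}\right)^{r_i}$ (Legendre symbols of images mod $p_i$), and $S(m)$ is the kernel of $a\mapsto\left(\frac{a}{m}\right)$ on $U(m)$. *)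

theory Defs
  imports "HOL-Number_Theory.Number_Theory"
begin

text \<open>Elements of Z_m are represented by integers in {0..<m}.\<close>

definition units_mod :: "nat \<Rightarrow> int set" where
  "units_mod m = {a \<in> {0..<int m}. coprime a (int m)}"

definition jacobi_sym :: "int \<Rightarrow> nat \<Rightarrow> int" where
  "jacobi_sym a m = (\<Prod>p\<in>prime_factors m. Legendre a (int p) ^ multiplicity p m)"

definition S_ker :: "nat \<Rightarrow> int set" where
  "S_ker m = {a \<in> units_mod m. jacobi_sym a m = 1}"

definition weighted_zero_sum :: "nat \<Rightarrow> int set \<Rightarrow> int list \<Rightarrow> bool" where
  "weighted_zero_sum n A xs \<longleftrightarrow>
     (\<exists>a :: nat \<Rightarrow> int. (\<forall>i<length xs. a i \<in> A) \<and>
        [(\<Sum>i<length xs. a i * xs ! i) = 0] (mod int n))"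

end

theory Submission
  imports Defs
begin

(* Work prime by prime.  Let n' = n / p'^2.  At a prime q of n', two terms coprime to q allow
   unit weights that kill the sum modulo q while giving weight 1 to the (at most one) term that is
   a unit modulo n'; at p' the same argument works modulo p'^2, and since v_p'(n) = 2 the p'-part
   of the Jacobi symbol of any unit is 1.  Every other term is divisible by some q | n', so its
   weight at q may be replaced by a quadratic nonresidue without changing the sum modulo q; this
   fixes the Jacobi symbol of its weight to 1.  The Chinese remainder theorem glues the local
   weights together into weights in S(n). *)

lemma coprime_int_prime_iff_not_dvd:
  assumes "prime p"
  shows "coprime a (int p) \<longleftrightarrow> \<not> int p dvd a"
  using assms by (simp add: residues_prime.p_coprime_right_int residues_prime_def)

lemma int_eq_prod_prime_power_multiplicity:
  assumes "n > 0"
  shows "int n = (\<Prod>p\<in>prime_factors n. int p ^ multiplicity p n)"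
proof -
  have "n = (\<Prod>p\<in>prime_factors n. p ^ multiplicity p n)"
    using prime_factorization_nat[OF assms] .
  then have "int n = int (\<Prod>p\<in>prime_factors n. p ^ multiplicity p n)"
    by simp
  then show ?thesis
    by simp
qed

lemma coprime_int_iff_coprime_prime_factors:
  assumes "n > 0"
  shows "coprime a (int n) \<longleftrightarrow> (\<forall>p\<in>prime_factors n. coprime a (int p))"
proof
  show "\<forall>p\<in>prime_factors n. coprime a (int p)" if "coprime a (int n)"
  proof
    fix p assume "p \<in> prime_factors n"
    then have "int p dvd int n"
      by (simp add: in_prime_factors_imp_dvd)
    then show "coprime a (int p)"
      using coprime_divisors[OF dvd_refl _ that] by blast
  qed
next
  assume "\<forall>p\<in>prime_factors n. coprime a (int p)"
  then have "coprime a (\<Prod>p\<in>prime_factors n. int p ^ multiplicity p n)"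
    by (auto intro: prod_coprime_right)
  then show "coprime a (int n)"
    using int_eq_prod_prime_power_multiplicity[OF assms] by simp
qed

lemma prime_factors_div_power_multiplicity:
  fixes n p :: nat
  assumes "n > 0" "prime p"
  shows "prime_factors (n div p ^ multiplicity p n) = prime_factors n - {p}"
proof -
  define m where "m = n div p ^ multiplicity p n"
  have n: "n = p ^ multiplicity p n * m"
    unfolding m_def by (simp add: multiplicity_dvd)
  then have "m \<noteq> 0"
    using assms(1) by (cases "m = 0") auto
  have "q dvd m \<longleftrightarrow> q dvd n \<and> q \<noteq> p" if "prime q" for q
  proof (cases "q = p")
    case True
    have "\<not> is_unit p"
      using assms(2) not_prime_unit by blast
    then have "\<not> p dvd m"
      unfolding m_def using assms(1) by (intro multiplicity_decompose) auto
    with True show ?thesis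
      by simp
  next
    case False
    then have "\<not> q dvd p ^ multiplicity p n"
      using that assms(2) prime_dvd_power primes_dvd_imp_eq by blast
    then show ?thesis
      using prime_dvd_mult_iff[OF that, of "p ^ multiplicity p n" m] n False by simp
  qed
  with \<open>m \<noteq> 0\<close> show ?thesis
    using assms(1) by (auto simp: in_prime_factors_iff m_def)
qed

lemma Legendre_cong:
  assumes "[a = b] (mod p)"
  shows "Legendre a p = Legendre b p"
proof -
  have "[a = 0] (mod p) \<longleftrightarrow> [b = 0] (mod p)"
    using assms by (meson cong_sym cong_trans)
  moreover have "QuadRes p a \<longleftrightarrow> QuadRes p b"
    unfolding QuadRes_def using assms by (meson cong_sym cong_trans)
  ultimately show ?thesis
    unfolding Legendre_def by simp
qed

lemma Legendre_one:
  fixes p :: nat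
  assumes "prime p"
  shows "Legendre 1 (int p) = 1"
proof -
  have "\<not> [1 = 0] (mod int p)"
    using assms by (auto simp: cong_0_iff)
  moreover have "QuadRes (int p) 1"
    unfolding QuadRes_def by (auto intro: exI[of _ 1])
  ultimately show ?thesis
    unfolding Legendre_def by simp
qed

lemma abs_Legendre_coprime:
  assumes "prime p" "coprime a (int p)"
  shows "\<bar>Legendre a (int p)\<bar> = 1"
  using assms by (auto simp: Legendre_def cong_0_iff coprime_int_prime_iff_not_dvd)

lemma exists_quadratic_nonresidue:
  assumes "prime p" "odd p"
  shows "\<exists>g. coprime g (int p) \<and> Legendre g (int p) = -1"
proof -
  have p3: "p \<ge> 3"
    using assms prime_ge_2_nat[OF assms(1)] by (cases "p = 2") auto
  obtain g where "residue_primroot p g"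
    using residue_primroot_odd_prime_power_exists[OF assms] by (metis power_one_right zero_less_one)
  then have coprime: "coprime (int g) (int p)" and ord: "ord p g = p - 1"
    using assms(1) by (auto simp: residue_primroot_def coprime_commute totient_prime)
  have "Legendre (int g) (int p) \<noteq> 1"
  proof
    assume "Legendre (int g) (int p) = 1"
    moreover have "[Legendre (int g) (int p) = int g ^ ((p - 1) div 2)] (mod int p)"
      using assms(1) p3 by (intro euler_criterion) auto
    ultimately have "[g ^ ((p - 1) div 2) = 1] (mod p)"
      by (metis cong_int_iff cong_sym of_nat_1 of_nat_power)
    moreover have "0 < (p - 1) div 2" "(p - 1) div 2 < ord p g"
      using p3 ord by auto
    ultimately show False
      using ord_minimal by blast
  qed
  then have "Legendre (int g) (int p) = -1"
    using abs_Legendre_coprime[OF assms(1) coprime] by (auto simp: abs_if split: if_splits)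
  with coprime show ?thesis
    by blast
qed

lemma exists_unit_cancelling_mod_power:
  fixes m t y :: int
  assumes "coprime t m" "coprime y m"
  shows "\<exists>c. coprime c m \<and> m ^ k dvd t + c * y"
proof -
  \<comment> \<open>Inverting y modulo m^(k+1) keeps the inverse a unit modulo m also when k = 0.\<close>
  have "coprime y (m ^ Suc k)"
    using assms(2) by simp
  then obtain z where z: "[y * z = 1] (mod m ^ Suc k)"
    using cong_solve_coprime_int by blast
  then have "coprime z (m ^ Suc k)"
    using cong_imp_coprime[OF cong_sym[OF z]] by simp
  then have "coprime (- t * z) m"
    using assms(1) by simp
  moreover have "[t + (- t) * (y * z) = t + (- t) * 1] (mod m ^ Suc k)"
    by (intro cong_add cong_mult cong_refl z)
  then have "[t + (- t * z) * y = 0] (mod m ^ Suc k)"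
    by (simp add: algebra_simps)
  then have "m ^ Suc k dvd t + (- t * z) * y"
    by (simp add: cong_0_iff)
  then have "m ^ k dvd t + (- t * z) * y"
    by (rule dvd_trans[rotated]) simp
  ultimately show ?thesis
    by blast
qed

lemma exists_unit_weights_sum_coprime:
  fixes p :: nat and x :: "'i \<Rightarrow> int"
  assumes p: "prime p" "odd p"
    and I: "finite I" "\<exists>i\<in>I. coprime (x i) (int p)"
    and F: "F \<subseteq> I" "card F \<le> 1" "\<forall>i\<in>F. coprime (x i) (int p)"
  shows "\<exists>u. (\<forall>i\<in>I. coprime (u i) (int p)) \<and> (\<forall>i\<in>F. u i = 1) \<and>
    coprime (\<Sum>i\<in>I. u i * x i) (int p)"
proof (cases "coprime (\<Sum>i\<in>I. x i) (int p)")
  case True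
  then show ?thesis
    by (intro exI[of _ "\<lambda>_. 1"]) simp
next
  case False
  then have sum_dvd: "int p dvd (\<Sum>i\<in>I. x i)"
    using coprime_int_prime_iff_not_dvd[OF p(1)] by blast
  show ?thesis
  proof (cases "\<exists>j\<in>I - F. coprime (x j) (int p)")
    case True
    then obtain j where j: "j \<in> I" "j \<notin> F" "coprime (x j) (int p)"
      by blast
    define u where "u = (\<lambda>_. 1) (j := 2 :: int)"
    have "(\<Sum>i\<in>I. u i * x i) = 2 * x j + (\<Sum>i\<in>I - {j}. x i)"
      using I(1) j(1) by (simp add: sum.remove u_def)
    also have "\<dots> = x j + (\<Sum>i\<in>I. x i)"
      using I(1) j(1) by (simp add: sum.remove)
    finally have "coprime (\<Sum>i\<in>I. u i * x i) (int p)"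
      using j(3) sum_dvd coprime_int_prime_iff_not_dvd[OF p(1)] by (simp add: dvd_add_left_iff)
    moreover have "coprime (2 :: int) (int p)"
      using p(2) by (simp add: coprime_commute)
    ultimately show ?thesis
      using j(2) by (intro exI[of _ u]) (auto simp: u_def)
  next
    case False
    with I(2) obtain i0 where i0: "i0 \<in> F" "coprime (x i0) (int p)"
      by blast
    have "finite F"
      using F(1) I(1) finite_subset by blast
    then have "F = {i0}"
      using F(2) i0(1) by (auto simp: card_le_Suc0_iff_eq)
    then have "int p dvd (\<Sum>i\<in>I - {i0}. x i)"
      using False coprime_int_prime_iff_not_dvd[OF p(1)] by (auto intro: dvd_sum)
    moreover have "(\<Sum>i\<in>I. x i) = x i0 + (\<Sum>i\<in>I - {i0}. x i)"
      using I(1) i0(1) F(1) by (auto intro: sum.remove)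
    ultimately have "int p dvd x i0"
      using sum_dvd by (simp add: dvd_add_left_iff)
    with i0(2) show ?thesis
      using coprime_int_prime_iff_not_dvd[OF p(1)] by blast
  qed
qed

lemma exists_unit_weights_prime_power_dvd_sum:
  fixes p :: nat and x :: "'i \<Rightarrow> int"
  assumes p: "prime p" "odd p"
    and I: "finite I" "card {i\<in>I. coprime (x i) (int p)} \<ge> 2"
    and F: "F \<subseteq> I" "card F \<le> 1" "\<forall>i\<in>F. coprime (x i) (int p)"
  shows "\<exists>u. (\<forall>i\<in>I. coprime (u i) (int p)) \<and> (\<forall>i\<in>F. u i = 1) \<and>
    int p ^ k dvd (\<Sum>i\<in>I. u i * x i)"
proof -
  define J where "J = {i\<in>I. coprime (x i) (int p)}"
  have "finite F"
    using F(1) I(1) finite_subset by blast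
  then have "card J - card F \<le> card (J - F)"
    by (rule diff_card_le_card_Diff)
  then have "card (J - F) > 0"
    using I(2) F(2) unfolding J_def[symmetric] by linarith
  then obtain j where j: "j \<in> J" "j \<notin> F"
    by (auto simp: card_gt_0_iff)
  have "card (J - {j}) > 0"
    using I(2) j(1) unfolding J_def[symmetric] by (simp add: card_Diff_singleton)
  then have "\<exists>i\<in>I - {j}. coprime (x i) (int p)"
    unfolding J_def by (auto simp: card_gt_0_iff)
  then obtain u0 where u0: "\<forall>i\<in>I - {j}. coprime (u0 i) (int p)" "\<forall>i\<in>F. u0 i = 1"
      "coprime (\<Sum>i\<in>I - {j}. u0 i * x i) (int p)"
    using exists_unit_weights_sum_coprime[OF p _ _ _ F(2-3), of "I - {j}"] I(1) F(1) j(2) by blast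
  obtain c where c: "coprime c (int p)" "int p ^ k dvd (\<Sum>i\<in>I - {j}. u0 i * x i) + c * x j"
    using exists_unit_cancelling_mod_power[OF u0(3)] j(1) unfolding J_def by blast
  define u where "u = u0 (j := c)"
  have "(\<Sum>i\<in>I. u i * x i) = u j * x j + (\<Sum>i\<in>I - {j}. u i * x i)"
    using I(1) j(1) unfolding J_def by (auto intro: sum.remove)
  also have "\<dots> = c * x j + (\<Sum>i\<in>I - {j}. u0 i * x i)"
    unfolding u_def by (auto intro: sum.cong)
  finally have "(\<Sum>i\<in>I. u i * x i) = c * x j + (\<Sum>i\<in>I - {j}. u0 i * x i)" .
  with c u0 j(2) show ?thesis
    by (intro exI[of _ u]) (auto simp: u_def add.commute)
qed

lemma exists_unit_fixing_Legendre_prod: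
  assumes "finite Q" "\<forall>q\<in>Q. prime q" "d \<in> Q" "odd d" "\<forall>q\<in>Q. coprime (f q) (int q)"
  shows "\<exists>c. coprime c (int d) \<and> (\<Prod>q\<in>Q. Legendre ((f(d := c)) q) (int q)) = 1"
proof -
  define R where "R = (\<Prod>q\<in>Q - {d}. Legendre (f q) (int q))"
  have "\<bar>R\<bar> = 1"
    unfolding R_def abs_prod using assms(2,5) by (simp add: abs_Legendre_coprime)
  have prod_eq: "(\<Prod>q\<in>Q. Legendre ((f(d := c)) q) (int q)) = Legendre c (int d) * R" for c
    unfolding R_def using assms(1,3) by (simp add: prod.remove)
  obtain g where g: "coprime g (int d)" "Legendre g (int d) = -1"
    using exists_quadratic_nonresidue assms(2-4) by blast
  show ?thesis
  proof (cases "R = 1")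
    case True
    then show ?thesis
      using prod_eq[of 1] assms(2,3) by (intro exI[of _ 1]) (simp add: Legendre_one)
  next
    case False
    with \<open>\<bar>R\<bar> = 1\<close> have "R = -1"
      by (auto simp: abs_if split: if_splits)
    then show ?thesis
      using prod_eq[of g] g by (intro exI[of _ g]) simp
  qed
qed

lemma exists_unit_weights_Legendre_prod_one:
  fixes m :: nat and x :: "'i \<Rightarrow> int"
  assumes m: "m > 0" "\<forall>q\<in>prime_factors m. odd q"
    and I: "finite I" "\<forall>q\<in>prime_factors m. card {i\<in>I. coprime (x i) (int q)} \<ge> 2"
    and units: "card {i\<in>I. coprime (x i) (int m)} \<le> 1"
  shows "\<exists>w. (\<forall>q\<in>prime_factors m. (\<forall>i\<in>I. coprime (w q i) (int q)) \<and>
      int q dvd (\<Sum>i\<in>I. w q i * x i)) \<and>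
    (\<forall>i\<in>I. (\<Prod>q\<in>prime_factors m. Legendre (w q i) (int q)) = 1)"
proof -
  define U where "U = {i\<in>I. coprime (x i) (int m)}"
  have U_coprime: "coprime (x i) (int q)" if "i \<in> U" "q \<in> prime_factors m" for i q
    using that coprime_int_iff_coprime_prime_factors[OF m(1)] unfolding U_def by blast
  have "\<forall>q\<in>prime_factors m. \<exists>u. (\<forall>i\<in>I. coprime (u i) (int q)) \<and> (\<forall>i\<in>U. u i = 1) \<and>
      int q dvd (\<Sum>i\<in>I. u i * x i)"
  proof
    fix q assume q: "q \<in> prime_factors m"
    have "prime q" "odd q"
      using q m(2) in_prime_factors_imp_prime by blast+
    moreover have "U \<subseteq> I" "card U \<le> 1" "\<forall>i\<in>U. coprime (x i) (int q)"
      using units U_coprime q unfolding U_def by blast+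
    ultimately show "\<exists>u. (\<forall>i\<in>I. coprime (u i) (int q)) \<and> (\<forall>i\<in>U. u i = 1) \<and>
        int q dvd (\<Sum>i\<in>I. u i * x i)"
      using exists_unit_weights_prime_power_dvd_sum[of q I x U 1] I q by simp
  qed
  from bchoice[OF this] obtain u where
    u: "\<forall>q\<in>prime_factors m. (\<forall>i\<in>I. coprime (u q i) (int q)) \<and>
      (\<forall>i\<in>U. u q i = 1) \<and> int q dvd (\<Sum>i\<in>I. u q i * x i)"
    by blast
  \<comment> \<open>A term divisible by q vanishes modulo q, so its weight at q is free to correct
    the Legendre product.\<close>
  have "\<forall>i\<in>I. \<exists>f. (\<forall>q\<in>prime_factors m.
      coprime (f q) (int q) \<and> (f q = u q i \<or> int q dvd x i)) \<and>
      (\<Prod>q\<in>prime_factors m. Legendre (f q) (int q)) = 1"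
  proof
    fix i assume i: "i \<in> I"
    show "\<exists>f. (\<forall>q\<in>prime_factors m.
        coprime (f q) (int q) \<and> (f q = u q i \<or> int q dvd x i)) \<and>
        (\<Prod>q\<in>prime_factors m. Legendre (f q) (int q)) = 1"
    proof (cases "i \<in> U")
      case True
      then have "(\<Prod>q\<in>prime_factors m. Legendre (u q i) (int q)) = 1"
        using u by (intro prod.neutral) (auto simp: Legendre_one dest: in_prime_factors_imp_prime)
      moreover have "\<forall>q\<in>prime_factors m. coprime (u q i) (int q)"
        using u i by blast
      ultimately show ?thesis
        by (intro exI[of _ "\<lambda>q. u q i"]) auto
    next
      case False
      then have "\<not> coprime (x i) (int m)"
        using i by (simp add: U_def)
      then obtain d where d: "d \<in> prime_factors m" "\<not> coprime (x i) (int d)"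
        using coprime_int_iff_coprime_prime_factors[OF m(1)] by blast
      then have "int d dvd x i"
        using coprime_int_prime_iff_not_dvd in_prime_factors_imp_prime by blast
      have "\<forall>q\<in>prime_factors m. prime q" "\<forall>q\<in>prime_factors m. coprime (u q i) (int q)"
        using u i by (auto dest: in_prime_factors_imp_prime)
      then obtain c where c: "coprime c (int d)"
          "(\<Prod>q\<in>prime_factors m. Legendre (((\<lambda>q. u q i)(d := c)) q) (int q)) = 1"
        using exists_unit_fixing_Legendre_prod[of "prime_factors m" d "\<lambda>q. u q i"] d(1) m(2)
        by blast
      show ?thesis
        using c \<open>int d dvd x i\<close> \<open>\<forall>q\<in>prime_factors m. coprime (u q i) (int q)\<close>
        by (intro exI[of _ "(\<lambda>q. u q i)(d := c)"]) auto
    qed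
  qed
  from bchoice[OF this] obtain f where
    f: "\<forall>i\<in>I. (\<forall>q\<in>prime_factors m. coprime (f i q) (int q) \<and>
      (f i q = u q i \<or> int q dvd x i)) \<and> (\<Prod>q\<in>prime_factors m. Legendre (f i q) (int q)) = 1"
    by blast
  define w where "w q i = f i q" for q i
  have "int q dvd (\<Sum>i\<in>I. w q i * x i)" if q: "q \<in> prime_factors m" for q
  proof -
    have "[w q i * x i = u q i * x i] (mod int q)" if "i \<in> I" for i
    proof (cases "w q i = u q i")
      case False
      then have "int q dvd x i"
        using f q that unfolding w_def by blast
      then show ?thesis
        by (simp add: cong_iff_dvd_diff flip: left_diff_distrib)
    qed simp
    then have "[(\<Sum>i\<in>I. w q i * x i) = (\<Sum>i\<in>I. u q i * x i)] (mod int q)"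
      by (rule cong_sum)
    then show ?thesis
      using u q cong_dvd_iff by blast
  qed
  moreover have "\<forall>q\<in>prime_factors m. \<forall>i\<in>I. coprime (w q i) (int q)"
    "\<forall>i\<in>I. (\<Prod>q\<in>prime_factors m. Legendre (w q i) (int q)) = 1"
    using f unfolding w_def by blast+
  ultimately show ?thesis
    by blast
qed

lemma exists_residue_cong_prime_power_factors:
  fixes n :: nat and r :: "nat \<Rightarrow> int"
  assumes "n > 0"
  shows "\<exists>a\<in>{0..<int n}. \<forall>p\<in>prime_factors n. [a = r p] (mod int p ^ multiplicity p n)"
proof -
  define M where "M p = p ^ multiplicity p n" for p
  have "\<forall>p\<in>prime_factors n. \<forall>q\<in>prime_factors n. p \<noteq> q \<longrightarrow> coprime (M p) (M q)"
  proof (intro ballI impI)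
    fix p q assume "p \<in> prime_factors n" "q \<in> prime_factors n" "p \<noteq> q"
    then have "coprime p q"
      by (intro primes_coprime) (auto dest: in_prime_factors_imp_prime)
    then show "coprime (M p) (M q)"
      unfolding M_def by simp
  qed
  then obtain b where b: "\<forall>p\<in>prime_factors n. [b = nat (r p mod int (M p))] (mod M p)"
    using chinese_remainder_nat[of "prime_factors n" M "\<lambda>p. nat (r p mod int (M p))"] by blast
  have "[int (b mod n) = r p] (mod int (M p))" if p: "p \<in> prime_factors n" for p
  proof -
    have "[b mod n = b] (mod n)"
      by (simp add: cong_def)
    then have "[b mod n = b] (mod M p)"
      by (rule cong_dvd_modulus_nat) (simp add: M_def multiplicity_dvd)
    then have "[b mod n = nat (r p mod int (M p))] (mod M p)"
      using b p cong_trans by blast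
    then have "[int (b mod n) = int (nat (r p mod int (M p)))] (mod int (M p))"
      by (simp only: cong_int_iff)
    moreover have "M p > 0"
      using prime_gt_0_nat[OF in_prime_factors_imp_prime[OF p]] unfolding M_def by simp
    then have "int (nat (r p mod int (M p))) = r p mod int (M p)"
      by simp
    moreover have "[r p mod int (M p) = r p] (mod int (M p))"
      by (simp add: cong_def)
    ultimately show ?thesis
      using cong_trans by metis
  qed
  then show ?thesis
    using assms by (intro bexI[of _ "int (b mod n)"]) (auto simp: M_def)
qed

lemma weighted_zero_sum_S_ker_from_local_weights:
  fixes n :: nat and xs :: "int list" and w :: "nat \<Rightarrow> nat \<Rightarrow> int"
  assumes n: "n > 0"
    and coprime: "\<forall>p\<in>prime_factors n. \<forall>i<length xs. coprime (w p i) (int p)"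
    and dvd: "\<forall>p\<in>prime_factors n. int p ^ multiplicity p n dvd (\<Sum>i<length xs. w p i * xs ! i)"
    and Legendre: "\<forall>i<length xs.
      (\<Prod>p\<in>prime_factors n. Legendre (w p i) (int p) ^ multiplicity p n) = 1"
  shows "weighted_zero_sum n (S_ker n) xs"
proof -
  have "\<forall>i. \<exists>b. b \<in> {0..<int n} \<and>
      (\<forall>p\<in>prime_factors n. [b = w p i] (mod int p ^ multiplicity p n))"
  proof
    fix i
    show "\<exists>b. b \<in> {0..<int n} \<and>
        (\<forall>p\<in>prime_factors n. [b = w p i] (mod int p ^ multiplicity p n))"
      using exists_residue_cong_prime_power_factors[OF n, of "\<lambda>p. w p i"] by blast
  qed
  from choice[OF this] obtain a where a: "\<forall>i. a i \<in> {0..<int n} \<and>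
      (\<forall>p\<in>prime_factors n. [a i = w p i] (mod int p ^ multiplicity p n))"
    by blast
  have a_cong: "[a i = w p i] (mod int p)" if p: "p \<in> prime_factors n" for p i
  proof -
    have "multiplicity p n > 0"
      using p prime_factors_multiplicity by blast
    then have "int p dvd int p ^ multiplicity p n"
      by simp
    then show ?thesis
      using a p cong_dvd_modulus by blast
  qed
  have "a i \<in> S_ker n" if i: "i < length xs" for i
  proof -
    have "coprime (a i) (int p)" if p: "p \<in> prime_factors n" for p
      using cong_imp_coprime[OF cong_sym[OF a_cong[OF p]]] coprime p i by blast
    then have "coprime (a i) (int n)"
      using coprime_int_iff_coprime_prime_factors[OF n] by blast
    moreover have "jacobi_sym (a i) n =
        (\<Prod>p\<in>prime_factors n. Legendre (w p i) (int p) ^ multiplicity p n)"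
      unfolding jacobi_sym_def by (rule prod.cong) (simp_all add: Legendre_cong[OF a_cong])
    then have "jacobi_sym (a i) n = 1"
      using Legendre i by simp
    ultimately show ?thesis
      using a unfolding S_ker_def units_mod_def by simp
  qed
  moreover have "[(\<Sum>i<length xs. a i * xs ! i) = 0] (mod int n)"
  proof -
    have local: "[(\<Sum>i<length xs. a i * xs ! i) = 0] (mod int p ^ multiplicity p n)"
      if p: "p \<in> prime_factors n" for p
    proof -
      have "[(\<Sum>i<length xs. a i * xs ! i) = (\<Sum>i<length xs. w p i * xs ! i)]
          (mod int p ^ multiplicity p n)"
        using a p by (intro cong_sum cong_mult cong_refl) auto
      then show ?thesis
        using dvd p by (simp add: cong_0_iff cong_dvd_iff)
    qed
    have "[(\<Sum>i<length xs. a i * xs ! i) = 0]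
        (mod (\<Prod>p\<in>prime_factors n. int p ^ multiplicity p n))"
    proof (rule cong_cong_prod_coprime)
      show "\<forall>p\<in>prime_factors n. \<forall>q\<in>prime_factors n. p \<noteq> q \<longrightarrow>
          coprime (int p ^ multiplicity p n) (int q ^ multiplicity q n)"
      proof (intro ballI impI)
        fix p q assume "p \<in> prime_factors n" "q \<in> prime_factors n" "p \<noteq> q"
        then have "coprime p q"
          by (intro primes_coprime) (auto dest: in_prime_factors_imp_prime)
        then show "coprime (int p ^ multiplicity p n) (int q ^ multiplicity q n)"
          by simp
      qed
    qed (use local in blast)
    then show ?thesis
      using int_eq_prod_prime_power_multiplicity[OF n] by simp
  qed
  ultimately show ?thesis
    unfolding weighted_zero_sum_def by blast
qed

theorem lemma4p3:
  fixes n p' :: nat and xs :: "int list"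
  assumes "n > 0" and "odd n"
    and "prime p'" and "multiplicity p' n = 2"
    and "\<forall>q. prime q \<and> q dvd n \<and> q \<noteq> p' \<longrightarrow> multiplicity q n = 1"
    and "\<forall>x\<in>set xs. x \<in> {0..<int n}"
    and "\<forall>p. prime p \<and> p dvd n \<longrightarrow>
           card {i. i < length xs \<and> coprime (xs ! i) (int p)} \<ge> 2"
    and "card {i. i < length xs \<and>
           coprime ((xs ! i) mod int (n div p'^2)) (int (n div p'^2))} \<le> 1"
  shows "weighted_zero_sum n (S_ker n) xs"
proof -
  define n' where "n' = n div p' ^ 2"
  have "p' ^ 2 dvd n"
    using multiplicity_dvd[of p' n] assms(4) by simp
  then have n': "n' > 0"
    using assms(1) dvd_div_eq_0_iff unfolding n'_def by fastforce
  have pf_n': "prime_factors n' = prime_factors n - {p'}"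
    using prime_factors_div_power_multiplicity[OF assms(1,3)] assms(4) unfolding n'_def by simp
  have p': "p' \<in> prime_factors n" "odd p'"
    using assms(1-3) \<open>p' ^ 2 dvd n\<close> dvd_trans[of p' "p' ^ 2" n]
    by (auto simp: in_prime_factors_iff)
  have pf_n: "prime_factors n = insert p' (prime_factors n')"
    using pf_n' p'(1) by blast
  have q: "prime q" "q dvd n" "odd q" "multiplicity q n = 1" if "q \<in> prime_factors n'" for q
    using that assms(2,5) pf_n' dvd_trans by (auto simp: in_prime_factors_iff)
  obtain w where
    w: "\<forall>q\<in>prime_factors n'. (\<forall>i\<in>{..<length xs}. coprime (w q i) (int q)) \<and>
      int q dvd (\<Sum>i\<in>{..<length xs}. w q i * xs ! i)"
    "\<forall>i\<in>{..<length xs}. (\<Prod>q\<in>prime_factors n'. Legendre (w q i) (int q)) = 1"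
    using exists_unit_weights_Legendre_prod_one[OF n', of "{..<length xs}" "(!) xs"]
      assms(7,8) q n' by (auto simp: n'_def coprime_mod_left_iff)
  obtain v where
    v: "\<forall>i\<in>{..<length xs}. coprime (v i) (int p')"
      "int p' ^ 2 dvd (\<Sum>i<length xs. v i * xs ! i)"
    using exists_unit_weights_prime_power_dvd_sum[of p' "{..<length xs}" "(!) xs" "{}" 2]
      assms(3,7) p' by (auto simp: in_prime_factors_iff)
  define W where "W p = (if p = p' then v else w p)" for p
  show ?thesis
  proof (rule weighted_zero_sum_S_ker_from_local_weights[OF assms(1), of _ W])
    show "\<forall>p\<in>prime_factors n. \<forall>i<length xs. coprime (W p i) (int p)"
      using v w by (auto simp: W_def pf_n)
    show "\<forall>p\<in>prime_factors n. int p ^ multiplicity p n dvd (\<Sum>i<length xs. W p i * xs ! i)"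
      using v w assms(4) q by (auto simp: W_def pf_n)
    show "\<forall>i<length xs. (\<Prod>p\<in>prime_factors n. Legendre (W p i) (int p) ^ multiplicity p n) = 1"
    proof (intro allI impI)
      fix i assume i: "i < length xs"
      have "p' \<notin> prime_factors n'"
        using pf_n' by blast
      then have "(\<Prod>p\<in>prime_factors n. Legendre (W p i) (int p) ^ multiplicity p n) =
          Legendre (v i) (int p') ^ 2 *
          (\<Prod>q\<in>prime_factors n'. Legendre (W q i) (int q) ^ multiplicity q n)"
        using assms(4) by (simp add: pf_n W_def)
      also have "\<dots> =
          Legendre (v i) (int p') ^ 2 * (\<Prod>q\<in>prime_factors n'. Legendre (w q i) (int q))"
        using \<open>p' \<notin> prime_factors n'\<close> q(4) by (auto simp: W_def intro!: prod.cong)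
      also have "\<dots> = 1"
        using abs_Legendre_coprime[OF assms(3)] v(1) w(2) i by (simp add: abs_square_eq_1)
      finally show "(\<Prod>p\<in>prime_factors n. Legendre (W p i) (int p) ^ multiplicity p n) = 1" .
    qed
  qed
qed

end
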